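(* Let $A\in\mathbb{R}^{n\times n}$, $C\in\mathbb{R}^{p\times n}$ and $K\in\mathbb{N}$, and let $$\mathcal{O}_K=\begin{bmatrix} C^\top & (CA)^\top & \cdots & (CA^{K-1})^\top\end{bmatrix}^\top\in\mathbb{R}^{pK\times n}.$$ Assume $\mathcal{O}_K$ has full column rank, set $\mathcal{W}_o:=\mathcal{O}_K^\top\mathcal{O}_K$, let $\Sigma_v\in\mathbb{R}^{n\times n}$ with $\Sigma_v\succ 0$, and define $M:=\mathcal{O}_K\mathcal{W}_o^{-1}\mathcal{O}_K^\top$ and $N:=\Sigma_v^{-1/2}\mathcal{W}_o^{-1}\mathcal{O}_K^\top$. Consider the optimization problem $$\max_{R\in\mathbb{R}^{pK\times pK},\ \beta\in\mathbb{R}^+}\ \beta\quad\text{subject to}\quad N^\top N+R-MRM\succeq \beta I_{pK}.$$ The optimal value of the objective function is $\beta_{\mathrm{opt}}=\lambda_{\min}(\Sigma_v^{-1}\mathcal{W}_o^{-1})$.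
   Context: $\Sigma_v^{-1/2}$ denotes the symmetric positive definite square root of $\Sigma_v^{-1}$. $\mathbb{R}^+$ denotes the positive reals. $Y\succeq \beta I$ means $Y-\beta I$ is symmetric positive semidefinite. $\lambda_{\min}(\cdot)$ denotes the smallest eigenvalue (the eigenvalues of $\Sigma_v^{-1}\mathcal{W}_o^{-1}$ are real and positive). *)

theory Defs
  imports "Jordan_Normal_Form.Matrix" "Jordan_Normal_Form.Gauss_Jordan_Elimination"
          "Jordan_Normal_Form.Char_Poly" "Jordan_Normal_Form.DL_Rank"
begin

text \<open>Observability matrix O_K = [C; CA; ...; CA^(K-1)], of size (p*K) x n,
  where p = dim_row C and n = dim_col C. Row i is row (i mod p) of C * A^(i div p).\<close>
definition obs_mat :: "real mat \<Rightarrow> real mat \<Rightarrow> nat \<Rightarrow> real mat" where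
  "obs_mat A C K = mat (dim_row C * K) (dim_col C)
     (\<lambda>(i, j). (C * A ^\<^sub>m (i div dim_row C)) $$ (i mod dim_row C, j))"

definition psd_mat :: "real mat \<Rightarrow> bool" where
  "psd_mat Y \<longleftrightarrow> Y \<in> carrier_mat (dim_row Y) (dim_row Y) \<and> transpose_mat Y = Y \<and>
     (\<forall>x \<in> carrier_vec (dim_row Y). x \<bullet> (Y *\<^sub>v x) \<ge> 0)"

definition pd_mat :: "real mat \<Rightarrow> bool" where
  "pd_mat Y \<longleftrightarrow> Y \<in> carrier_mat (dim_row Y) (dim_row Y) \<and> transpose_mat Y = Y \<and>
     (\<forall>x \<in> carrier_vec (dim_row Y). x \<noteq> 0\<^sub>v (dim_row Y) \<longrightarrow> x \<bullet> (Y *\<^sub>v x) > 0)"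

definition psd_ge :: "real mat \<Rightarrow> real \<Rightarrow> bool" where
  "psd_ge Y \<beta> \<longleftrightarrow> psd_mat (Y - \<beta> \<cdot>\<^sub>m 1\<^sub>m (dim_row Y))"

definition minv :: "real mat \<Rightarrow> real mat" where
  "minv X = the (mat_inverse X)"

definition pd_sqrt :: "real mat \<Rightarrow> real mat" where
  "pd_sqrt S = (THE R. R \<in> carrier_mat (dim_row S) (dim_row S) \<and> pd_mat R \<and> R * R = S)"

definition lambda_min :: "real mat \<Rightarrow> real" where
  "lambda_min X = Min {k. eigenvalue X k}"

end

theory Submission
  imports Defs
begin

(* Write W = O^T O and, for x in R^(pK), y = W^-1 O^T x for the least-squares coefficient of x,
   so that M x = O y is the orthogonal projection of x onto the range of O. The quadratic form of
   N^T N + R - M R M - beta I at x is then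
     y^T Sigma^-1 y + x^T R x - (M x)^T R (M x) - beta |x|^2.
   For R = mu (I - M) the two R-terms add up to mu (|x|^2 - y^T W y), since M is a projection, and
   the form becomes y^T Sigma^-1 y - mu y^T W y. This is nonnegative for every y when mu is the
   smallest eigenvalue of the pencil (Sigma^-1, W), which is lambda_min (Sigma^-1 W^-1).
   Conversely, at x = O y the R-terms cancel because M x = x, so a feasible beta satisfies
   beta y^T W y <= y^T Sigma^-1 y, and a generalized eigenvector y gives beta <= mu.
   The Rayleigh-quotient description of mu, and the square roots, come from the spectral theorem
   for real symmetric matrices, proved by Householder deflation. *)

section \<open>Quadratic forms and diagonal matrices\<close>

lemma scalar_prod_self_pos_iff:
  fixes v :: "real vec"
  assumes "v \<in> carrier_vec n"
  shows "0 < v \<bullet> v \<longleftrightarrow> v \<noteq> 0\<^sub>v n"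
  using conjugate_square_greater_0_vec[OF assms] by simp

lemma quad_form_add:
  fixes A B :: "'a :: comm_semiring_0 mat"
  assumes "A \<in> carrier_mat m m" "B \<in> carrier_mat m m" "x \<in> carrier_vec m"
  shows "x \<bullet> ((A + B) *\<^sub>v x) = x \<bullet> (A *\<^sub>v x) + x \<bullet> (B *\<^sub>v x)"
  using assms by (simp add: add_mult_distrib_mat_vec scalar_prod_add_distrib[of _ m])

lemma quad_form_minus:
  fixes A B :: "'a :: comm_ring mat"
  assumes "A \<in> carrier_mat m m" "B \<in> carrier_mat m m" "x \<in> carrier_vec m"
  shows "x \<bullet> ((A - B) *\<^sub>v x) = x \<bullet> (A *\<^sub>v x) - x \<bullet> (B *\<^sub>v x)"
  using assms by (simp add: minus_mult_distrib_mat_vec scalar_prod_minus_distrib[of _ m])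

lemma smult_mat_mult_vec:
  fixes A :: "'a :: comm_semiring_0 mat"
  assumes "A \<in> carrier_mat m k" "x \<in> carrier_vec k"
  shows "(c \<cdot>\<^sub>m A) *\<^sub>v x = c \<cdot>\<^sub>v (A *\<^sub>v x)"
  using assms by (intro eq_vecI) (auto simp: smult_scalar_prod_distrib[of _ k])

lemma quad_form_smult:
  fixes A :: "'a :: comm_semiring_0 mat"
  assumes "A \<in> carrier_mat m m" "x \<in> carrier_vec m"
  shows "x \<bullet> ((c \<cdot>\<^sub>m A) *\<^sub>v x) = c * (x \<bullet> (A *\<^sub>v x))"
  using assms by (simp add: smult_mat_mult_vec scalar_prod_smult_distrib[of _ m])

lemma quad_form_sandwich:
  fixes A B :: "'a :: comm_semiring_0 mat"
  assumes A: "A \<in> carrier_mat m m" and B: "B \<in> carrier_mat m m" and BT: "transpose_mat B = B"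
    and x: "x \<in> carrier_vec m"
  shows "x \<bullet> ((B * A * B) *\<^sub>v x) = (B *\<^sub>v x) \<bullet> (A *\<^sub>v (B *\<^sub>v x))"
proof -
  have "(B * A * B) *\<^sub>v x = B *\<^sub>v (A *\<^sub>v (B *\<^sub>v x))"
    using A B x by (simp add: assoc_mult_mat_vec[of _ m m _ m])
  moreover have "x \<bullet> (B *\<^sub>v (A *\<^sub>v (B *\<^sub>v x))) = (transpose_mat B *\<^sub>v x) \<bullet> (A *\<^sub>v (B *\<^sub>v x))"
    using transpose_vec_mult_scalar[OF B _ x, of "A *\<^sub>v (B *\<^sub>v x)"] A B x by simp
  ultimately show ?thesis using BT by simp
qed

lemma quad_form_gram:
  fixes N :: "'a :: comm_semiring_0 mat"
  assumes N: "N \<in> carrier_mat k m" and x: "x \<in> carrier_vec m"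
  shows "x \<bullet> ((transpose_mat N * N) *\<^sub>v x) = (N *\<^sub>v x) \<bullet> (N *\<^sub>v x)"
proof -
  have NT: "transpose_mat N \<in> carrier_mat m k" using N by auto
  have "x \<bullet> ((transpose_mat N * N) *\<^sub>v x) = x \<bullet> (transpose_mat N *\<^sub>v (N *\<^sub>v x))"
    using assoc_mult_mat_vec[OF NT N x] by simp
  also have "\<dots> = (N *\<^sub>v x) \<bullet> (N *\<^sub>v x)"
    using transpose_vec_mult_scalar[OF NT _ x, of "N *\<^sub>v x"] N x by simp
  finally show ?thesis .
qed

lemma transpose_smult_mat: "transpose_mat (c \<cdot>\<^sub>m A) = c \<cdot>\<^sub>m transpose_mat A"
  by (intro eq_matI) auto

lemma transpose_sandwich:
  fixes A B :: "'a :: comm_semiring_0 mat"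
  assumes A: "A \<in> carrier_mat m m" and B: "B \<in> carrier_mat m m"
  shows "transpose_mat (B * A * B) = transpose_mat B * transpose_mat A * transpose_mat B"
  using transpose_mult[of "B * A" m m B m] transpose_mult[OF B A] A B
  by (simp add: assoc_mult_mat[of _ m m _ m _ m])

lemma transpose_mat_diag [simp]: "transpose_mat (mat_diag n f) = mat_diag n f"
  unfolding mat_diag_def by (rule eq_matI) auto

lemma mat_diag_mult_vec:
  assumes "v \<in> carrier_vec n"
  shows "mat_diag n f *\<^sub>v v = vec n (\<lambda>i. f i * v $ i)"
proof (rule eq_vecI)
  fix i assume "i < dim_vec (vec n (\<lambda>i. f i * v $ i))"
  then have i: "i < n" by simp
  have "(mat_diag n f *\<^sub>v v) $ i = (\<Sum>k\<in>{0..<n}. (if i = k then f k else 0) * v $ k)"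
    using i assms by (simp add: mat_diag_def scalar_prod_def)
  also have "\<dots> = (\<Sum>k\<in>{0..<n}. if k = i then f i * v $ i else 0)"
    by (rule sum.cong) auto
  finally show "(mat_diag n f *\<^sub>v v) $ i = vec n (\<lambda>i. f i * v $ i) $ i"
    using i by simp
qed (auto simp: mat_diag_def)

lemma quad_form_mat_diag:
  fixes v :: "'a :: comm_ring vec"
  assumes "v \<in> carrier_vec n"
  shows "v \<bullet> (mat_diag n f *\<^sub>v v) = (\<Sum>i\<in>{0..<n}. f i * (v $ i * v $ i))"
  using assms by (auto simp: mat_diag_mult_vec scalar_prod_def algebra_simps intro!: sum.cong)

lemma eigenvalue_mat_diag_iff:
  fixes d :: "nat \<Rightarrow> 'a :: field"
  shows "eigenvalue (mat_diag n d) k \<longleftrightarrow> (\<exists>i<n. d i = k)"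
proof -
  have ut: "upper_triangular (mat_diag n d)" by (auto simp: upper_triangular_def mat_diag_def)
  have "diag_mat (mat_diag n d) = map d [0..<n]" by (simp add: diag_mat_def mat_diag_def)
  then have "char_poly (mat_diag n d) = (\<Prod>a\<leftarrow>map d [0..<n]. [:- a, 1:])"
    using char_poly_upper_triangular[OF mat_diag_dim ut] by simp
  then show ?thesis
    unfolding eigenvalue_root_char_poly[OF mat_diag_dim]
    by (auto simp: poly_prod_list prod_list_zero_iff)
qed

lemma eigenvalue_similar_mat_iff:
  fixes A B :: "'a :: field mat"
  assumes "similar_mat A B" "A \<in> carrier_mat n n" "B \<in> carrier_mat n n"
  shows "eigenvalue A k \<longleftrightarrow> eigenvalue B k"
  unfolding eigenvalue_root_char_poly[OF assms(2)] eigenvalue_root_char_poly[OF assms(3)]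
    char_poly_similar[OF assms(1)] ..

section \<open>Spectral theorem for real symmetric matrices\<close>

locale orthonormal_mat =
  fixes Q :: "real mat" and n :: nat
  assumes carrier: "Q \<in> carrier_mat n n"
    and transpose_mult_self: "transpose_mat Q * Q = 1\<^sub>m n"
    and mult_transpose_self: "Q * transpose_mat Q = 1\<^sub>m n"
begin

lemma transpose_carrier: "transpose_mat Q \<in> carrier_mat n n"
  using carrier by auto

lemma transpose_mult_vec_cancel: "v \<in> carrier_vec n \<Longrightarrow> transpose_mat Q *\<^sub>v (Q *\<^sub>v v) = v"
  using assoc_mult_mat_vec[OF transpose_carrier carrier, of v] transpose_mult_self by simp

lemma conj_mult:
  assumes A: "A \<in> carrier_mat n n" and B: "B \<in> carrier_mat n n"
  shows "(Q * A * transpose_mat Q) * (Q * B * transpose_mat Q) = Q * (A * B) * transpose_mat Q"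
proof -
  have "transpose_mat Q * (Q * (B * transpose_mat Q)) = B * transpose_mat Q"
    using assoc_mult_mat[OF transpose_carrier carrier, of "B * transpose_mat Q" n]
      transpose_mult_self B transpose_carrier by simp
  then show ?thesis
    using carrier transpose_carrier A B by (simp add: assoc_mult_mat[of _ n n _ n _ n])
qed

lemma transpose_conj:
  assumes A: "A \<in> carrier_mat n n"
  shows "transpose_mat (Q * A * transpose_mat Q) = Q * transpose_mat A * transpose_mat Q"
proof -
  have QA: "Q * A \<in> carrier_mat n n" using carrier A by auto
  show ?thesis
    using transpose_mult[OF QA transpose_carrier] transpose_mult[OF carrier A] carrier A
    by (simp add: assoc_mult_mat[of _ n n _ n _ n])
qed

lemma conj_mult_vec:
  assumes A: "A \<in> carrier_mat n n" and x: "x \<in> carrier_vec n"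
  shows "(Q * A * transpose_mat Q) *\<^sub>v x = Q *\<^sub>v (A *\<^sub>v (transpose_mat Q *\<^sub>v x))"
  using carrier transpose_carrier A x by (simp add: assoc_mult_mat_vec[of _ n n _ n])

lemma quad_form_conj:
  assumes A: "A \<in> carrier_mat n n" and x: "x \<in> carrier_vec n"
  shows "x \<bullet> ((Q * A * transpose_mat Q) *\<^sub>v x)
    = (transpose_mat Q *\<^sub>v x) \<bullet> (A *\<^sub>v (transpose_mat Q *\<^sub>v x))"
  unfolding conj_mult_vec[OF A x]
  by (rule transpose_vec_mult_scalar[OF carrier _ x, symmetric]) (use A x transpose_carrier in auto)

lemma norm_transpose_mult_vec:
  assumes x: "x \<in> carrier_vec n"
  shows "(transpose_mat Q *\<^sub>v x) \<bullet> (transpose_mat Q *\<^sub>v x) = x \<bullet> x"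
  using quad_form_conj[OF one_carrier_mat x] mult_transpose_self x transpose_carrier by simp

lemma eigenvalue_conj_mat_diag_iff:
  "eigenvalue (Q * mat_diag n d * transpose_mat Q) k \<longleftrightarrow> (\<exists>i<n. d i = k)"
proof -
  have "similar_mat (Q * mat_diag n d * transpose_mat Q) (mat_diag n d)"
    by (rule similar_matI[of _ _ Q "transpose_mat Q" n])
      (use carrier transpose_carrier mult_transpose_self transpose_mult_self in auto)
  then have "eigenvalue (Q * mat_diag n d * transpose_mat Q) k \<longleftrightarrow> eigenvalue (mat_diag n d) k"
    by (rule eigenvalue_similar_mat_iff) (use carrier in auto)
  then show ?thesis
    unfolding eigenvalue_mat_diag_iff .
qed

lemma basis_vec_carrier: "Q *\<^sub>v unit_vec n i \<in> carrier_vec n"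
  using carrier by auto

lemma basis_vec_norm:
  assumes "i < n"
  shows "(Q *\<^sub>v unit_vec n i) \<bullet> (Q *\<^sub>v unit_vec n i) = 1"
  using norm_transpose_mult_vec[OF basis_vec_carrier, of i] transpose_mult_vec_cancel[OF unit_vec_carrier]
    scalar_prod_right_unit[OF assms] assms by simp

lemma basis_vec_nonzero:
  assumes "i < n"
  shows "Q *\<^sub>v unit_vec n i \<noteq> 0\<^sub>v n"
  using basis_vec_norm[OF assms] by auto

lemma basis_vec_eigenvector:
  assumes i: "i < n"
  shows "(Q * mat_diag n d * transpose_mat Q) *\<^sub>v (Q *\<^sub>v unit_vec n i) = d i \<cdot>\<^sub>v (Q *\<^sub>v unit_vec n i)"
proof -
  have "mat_diag n d *\<^sub>v unit_vec n i = d i \<cdot>\<^sub>v unit_vec n i"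
    using i by (intro eq_vecI) (auto simp: mat_diag_mult_vec)
  then show ?thesis
    unfolding conj_mult_vec[OF mat_diag_dim basis_vec_carrier] transpose_mult_vec_cancel[OF unit_vec_carrier]
    using carrier by (simp add: mult_mat_vec)
qed

lemma quad_form_basis_vec:
  assumes i: "i < n"
  shows "(Q *\<^sub>v unit_vec n i) \<bullet> ((Q * mat_diag n d * transpose_mat Q) *\<^sub>v (Q *\<^sub>v unit_vec n i)) = d i"
  unfolding basis_vec_eigenvector[OF i]
  using basis_vec_norm[OF i] by (simp add: scalar_prod_smult_distrib[OF _ basis_vec_carrier])

lemma quad_form_conj_mat_diag_lower:
  assumes x: "x \<in> carrier_vec n" and c: "\<And>i. i < n \<Longrightarrow> c \<le> d i"
  shows "c * (x \<bullet> x) \<le> x \<bullet> ((Q * mat_diag n d * transpose_mat Q) *\<^sub>v x)"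
proof -
  define y where "y = transpose_mat Q *\<^sub>v x"
  have y: "y \<in> carrier_vec n" unfolding y_def using x transpose_carrier by auto
  have "x \<bullet> x = y \<bullet> y" using norm_transpose_mult_vec[OF x] by (simp add: y_def)
  then have "c * (x \<bullet> x) = (\<Sum>i\<in>{0..<n}. c * (y $ i * y $ i))"
    using y by (simp add: scalar_prod_def sum_distrib_left)
  also have "\<dots> \<le> (\<Sum>i\<in>{0..<n}. d i * (y $ i * y $ i))"
    by (intro sum_mono mult_right_mono) (auto simp: c)
  also have "\<dots> = x \<bullet> ((Q * mat_diag n d * transpose_mat Q) *\<^sub>v x)"
    using quad_form_conj[OF mat_diag_dim x] quad_form_mat_diag[OF y] by (simp add: y_def)
  finally show ?thesis .
qed

end

lemma orthonormal_mat_mult: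
  assumes "orthonormal_mat P n" "orthonormal_mat Q n"
  shows "orthonormal_mat (P * Q) n"
proof -
  interpret P: orthonormal_mat P n by fact
  interpret Q: orthonormal_mat Q n by fact
  have T: "transpose_mat (P * Q) = transpose_mat Q * transpose_mat P"
    by (rule transpose_mult[OF P.carrier Q.carrier])
  have "transpose_mat Q * transpose_mat P * (P * Q) = transpose_mat Q * (transpose_mat P * P) * Q"
    using P.carrier Q.carrier by (simp add: assoc_mult_mat[of _ n n _ n _ n])
  moreover have "P * Q * (transpose_mat Q * transpose_mat P) = P * (Q * transpose_mat Q) * transpose_mat P"
    using P.carrier Q.carrier by (simp add: assoc_mult_mat[of _ n n _ n _ n])
  ultimately show ?thesis
    unfolding orthonormal_mat_def T
    using P.carrier Q.carrier P.transpose_mult_self Q.transpose_mult_self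
      P.mult_transpose_self Q.mult_transpose_self by auto
qed

lemma orthonormal_mat_four_block:
  assumes "orthonormal_mat Q m"
  shows "orthonormal_mat (four_block_mat (1\<^sub>m 1) (0\<^sub>m 1 m) (0\<^sub>m m 1) Q) (Suc m)"
proof -
  interpret orthonormal_mat Q m by fact
  have T: "transpose_mat (four_block_mat (1\<^sub>m 1) (0\<^sub>m 1 m) (0\<^sub>m m 1) Q)
      = four_block_mat (1\<^sub>m 1) (0\<^sub>m 1 m) (0\<^sub>m m 1) (transpose_mat Q)"
    by (subst transpose_four_block_mat[of _ 1 1 _ m _ m]) (use carrier in auto)
  have "transpose_mat (four_block_mat (1\<^sub>m 1) (0\<^sub>m 1 m) (0\<^sub>m m 1) Q)
      * four_block_mat (1\<^sub>m 1) (0\<^sub>m 1 m) (0\<^sub>m m 1) Q = 1\<^sub>m (Suc m)"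
    unfolding T by (subst mult_four_block_mat[of _ 1 1 _ m _ m]) (use carrier transpose_mult_self in auto)
  moreover have "four_block_mat (1\<^sub>m 1) (0\<^sub>m 1 m) (0\<^sub>m m 1) Q
      * transpose_mat (four_block_mat (1\<^sub>m 1) (0\<^sub>m 1 m) (0\<^sub>m m 1) Q) = 1\<^sub>m (Suc m)"
    unfolding T by (subst mult_four_block_mat[of _ 1 1 _ m _ m]) (use carrier mult_transpose_self in auto)
  ultimately show ?thesis
    unfolding orthonormal_mat_def using carrier by auto
qed

lemma mat_diag_Suc:
  "mat_diag (Suc m) (\<lambda>i. if i = 0 then e else d (i - 1))
    = four_block_mat (mat 1 1 (\<lambda>_. e)) (0\<^sub>m 1 m) (0\<^sub>m m 1) (mat_diag m d)"
  by (rule eq_matI) (auto simp: mat_diag_def)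

lemma conj_four_block_mat:
  fixes E A Q :: "'a :: comm_ring_1 mat"
  assumes E: "E \<in> carrier_mat 1 1" and A: "A \<in> carrier_mat m m" and Q: "Q \<in> carrier_mat m m"
  shows "four_block_mat (1\<^sub>m 1) (0\<^sub>m 1 m) (0\<^sub>m m 1) Q * four_block_mat E (0\<^sub>m 1 m) (0\<^sub>m m 1) A
      * transpose_mat (four_block_mat (1\<^sub>m 1) (0\<^sub>m 1 m) (0\<^sub>m m 1) Q)
    = four_block_mat E (0\<^sub>m 1 m) (0\<^sub>m m 1) (Q * A * transpose_mat Q)"
  using E A Q
  apply (subst transpose_four_block_mat[of _ 1 1 _ m _ m], auto)
  apply (subst mult_four_block_mat[of _ 1 1 _ m _ m], auto)
  apply (subst mult_four_block_mat[of _ 1 1 _ m _ m], auto)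
  done

lemma real_symmetric_hermitian_form_real:
  fixes S :: "real mat" and v :: "complex vec"
  assumes S: "S \<in> carrier_mat n n" and sym: "transpose_mat S = S"
  shows "cnj (\<Sum>i<n. \<Sum>j<n. cnj (v$i) * of_real (S$$(i,j)) * v$j)
    = (\<Sum>i<n. \<Sum>j<n. cnj (v$i) * of_real (S$$(i,j)) * v$j)"
proof -
  have "cnj (\<Sum>i<n. \<Sum>j<n. cnj (v$i) * of_real (S$$(i,j)) * v$j)
      = (\<Sum>j<n. \<Sum>i<n. v$i * of_real (S$$(i,j)) * cnj (v$j))"
    by (subst sum.swap) simp
  also have "\<dots> = (\<Sum>i<n. \<Sum>j<n. cnj (v$i) * of_real (S$$(i,j)) * v$j)"
  proof (intro sum.cong refl)
    fix i j assume "i \<in> {..<n}" "j \<in> {..<n}"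
    then have "S $$ (j, i) = S $$ (i, j)"
      using arg_cong[OF sym, of "\<lambda>X. X $$ (i, j)"] S by simp
    then show "v$j * of_real (S$$(j,i)) * cnj (v$i) = cnj (v$i) * of_real (S$$(i,j)) * v$j"
      by simp
  qed
  finally show ?thesis .
qed

lemma real_symmetric_eigenvalue_real:
  fixes S :: "real mat"
  assumes S: "S \<in> carrier_mat n n" and sym: "transpose_mat S = S"
    and ev: "eigenvector (map_mat complex_of_real S) v a"
  shows "cnj a = a"
proof -
  have v: "v \<in> carrier_vec n" and v0: "v \<noteq> 0\<^sub>v n" and Av: "map_mat complex_of_real S *\<^sub>v v = a \<cdot>\<^sub>v v"
    using ev S unfolding eigenvector_def by auto
  define s where "s = (\<Sum>i<n. \<Sum>j<n. cnj (v$i) * of_real (S$$(i,j)) * v$j)"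
  define r where "r = (\<Sum>i<n. cnj (v$i) * v$i)"
  have row: "(\<Sum>j<n. of_real (S$$(i,j)) * v$j) = a * v$i" if i: "i < n" for i
  proof -
    have "(map_mat complex_of_real S *\<^sub>v v) $ i = (\<Sum>j<n. of_real (S$$(i,j)) * v$j)"
      using i v S by (auto simp: scalar_prod_def lessThan_atLeast0 intro!: sum.cong)
    then show ?thesis using Av i v by simp
  qed
  have "s = (\<Sum>i<n. cnj (v$i) * (\<Sum>j<n. of_real (S$$(i,j)) * v$j))"
    unfolding s_def by (simp add: sum_distrib_left mult.assoc)
  also have "\<dots> = a * r"
    by (simp add: row r_def sum_distrib_left mult.left_commute)
  finally have s_eq: "s = a * r" .
  have r_real: "cnj r = r" unfolding r_def by (simp add: ac_simps)
  obtain i where i: "i < n" "v $ i \<noteq> 0" using v v0 by (metis eq_vecI carrier_vecD index_zero_vec)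
  have "Re r = (\<Sum>i<n. (cmod (v$i))\<^sup>2)"
    unfolding r_def by (simp add: complex_mult_cnj cmod_def power2_eq_square)
  also have "\<dots> > 0" by (rule sum_pos2[OF finite_lessThan, of i]) (use i in auto)
  finally have "r \<noteq> 0" by auto
  moreover have "cnj a * r = a * r"
    using s_eq real_symmetric_hermitian_form_real[OF S sym, of v] r_real
    unfolding s_def[symmetric] by (metis complex_cnj_mult)
  ultimately show ?thesis by simp
qed

lemma real_symmetric_mat_has_unit_eigenvector:
  fixes S :: "real mat"
  assumes S: "S \<in> carrier_mat n n" and sym: "transpose_mat S = S" and n: "0 < n"
  shows "\<exists>e u. u \<in> carrier_vec n \<and> u \<bullet> u = 1 \<and> S *\<^sub>v u = e \<cdot>\<^sub>v u"
proof -
  define Ac where "Ac = map_mat complex_of_real S"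
  have Ac: "Ac \<in> carrier_mat n n" using S unfolding Ac_def by auto
  obtain as where cp: "char_poly Ac = (\<Prod>a\<leftarrow>as. [:- a, 1:])" and len: "length as = n"
    using char_poly_factorized[OF Ac] by auto
  from len n obtain a as' where "as = a # as'" by (cases as) auto
  then have root: "poly (char_poly Ac) a = 0" unfolding cp by simp
  then obtain v where "eigenvector Ac v a"
    using eigenvalue_root_char_poly[OF Ac] unfolding eigenvalue_def by auto
  then have "cnj a = a" using real_symmetric_eigenvalue_real[OF S sym] unfolding Ac_def by blast
  then have "a = complex_of_real (Re a)" by (simp add: complex_eq_iff)
  then have "poly (char_poly Ac) (complex_of_real (Re a)) = 0"
    using root by simp
  then have "complex_of_real (poly (char_poly S) (Re a)) = 0"
    unfolding Ac_def of_real_hom.char_poly_hom[OF S] of_real_hom.poly_map_poly .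
  then have "eigenvalue S (Re a)" using eigenvalue_root_char_poly[OF S] by simp
  then obtain v where v: "v \<in> carrier_vec n" "v \<noteq> 0\<^sub>v n" and Sv: "S *\<^sub>v v = Re a \<cdot>\<^sub>v v"
    unfolding eigenvalue_def eigenvector_def using S by auto
  define u where "u = (1 / sqrt (v \<bullet> v)) \<cdot>\<^sub>v v"
  have "0 < v \<bullet> v" using scalar_prod_self_pos_iff v by blast
  then have "u \<bullet> u = 1" unfolding u_def using v
    by (simp add: smult_scalar_prod_distrib[OF _ v(1)] scalar_prod_smult_distrib[OF _ v(1)])
  moreover have "S *\<^sub>v u = Re a \<cdot>\<^sub>v u" unfolding u_def using S v Sv
    by (simp add: mult_mat_vec smult_smult_assoc mult.commute)
  moreover have "u \<in> carrier_vec n" using v unfolding u_def by auto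
  ultimately show ?thesis by blast
qed

text \<open>For \<open>w = 0\<close> this is the identity, since \<open>2 / 0 = 0\<close>.\<close>

definition reflection_mat :: "nat \<Rightarrow> real vec \<Rightarrow> real mat" where
  "reflection_mat N w = mat N N (\<lambda>(i, j). (if i = j then 1 else 0) - 2 / (w \<bullet> w) * w $ i * w $ j)"

lemma reflection_mat_carrier [simp]:
  "reflection_mat N w \<in> carrier_mat N N" "dim_row (reflection_mat N w) = N" "dim_col (reflection_mat N w) = N"
  unfolding reflection_mat_def by auto

lemma transpose_reflection_mat [simp]: "transpose_mat (reflection_mat N w) = reflection_mat N w"
  unfolding reflection_mat_def by (rule eq_matI) auto

lemma reflection_mat_involutive:
  assumes w: "w \<in> carrier_vec N"
  shows "reflection_mat N w * reflection_mat N w = 1\<^sub>m N"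
proof (rule eq_matI)
  define a where "a = 2 / (w \<bullet> w)"
  let ?H = "reflection_mat N w"
  have H: "?H $$ (i, j) = (if i = j then 1 else 0) - a * w $ i * w $ j" if "i < N" "j < N" for i j
    using that by (simp add: reflection_mat_def a_def)
  have a: "a * a * (w \<bullet> w) = 2 * a" unfolding a_def by (cases "w \<bullet> w = 0") (auto simp: field_simps)
  have ww: "w \<bullet> w = (\<Sum>k\<in>{0..<N}. w $ k * w $ k)" using w by (simp add: scalar_prod_def)
  fix i j assume "i < dim_row (1\<^sub>m N)" "j < dim_col (1\<^sub>m N)"
  then have i: "i < N" and j: "j < N" by auto
  have "(?H * ?H) $$ (i, j) = (\<Sum>k\<in>{0..<N}. ?H $$ (i, k) * ?H $$ (k, j))"
    using i j by (auto simp: scalar_prod_def intro!: sum.cong)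
  also have "\<dots> = (\<Sum>k\<in>{0..<N}. (if k = i then ?H $$ (i, j) else 0) - (if k = j then a * w$i * w$j else 0)
      + (a * a * w$i * w$j) * (w$k * w$k))"
    by (rule sum.cong) (use i j in \<open>auto simp: H algebra_simps\<close>)
  also have "\<dots> = ?H $$ (i, j) - a * w$i * w$j + (a * a * w$i * w$j) * (w \<bullet> w)"
    using i j by (simp add: ww sum.distrib sum_subtractf flip: sum_distrib_left)
  also have "\<dots> = 1\<^sub>m N $$ (i, j)"
    using i j a by (auto simp: H algebra_simps)
  finally show "(?H * ?H) $$ (i, j) = 1\<^sub>m N $$ (i, j)" .
qed auto

lemma reflection_mat_unit_vec:
  assumes u: "u \<in> carrier_vec N" and uu: "u \<bullet> u = 1" and N: "0 < N"
  shows "reflection_mat N (u - unit_vec N 0) *\<^sub>v unit_vec N 0 = u"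
proof (rule eq_vecI)
  define w where "w = u - unit_vec N 0"
  define c where "c = 2 / (w \<bullet> w)"
  have w: "w \<in> carrier_vec N" and wi: "\<And>i. i < N \<Longrightarrow> w $ i = u $ i - (if i = 0 then 1 else 0)"
    unfolding w_def using u by auto
  have "w \<bullet> w = (\<Sum>k\<in>{0..<N}. u$k * u$k - 2 * (if k = 0 then u$k else 0) + (if k = 0 then 1 else 0))"
    using w by (auto simp: scalar_prod_def wi algebra_simps intro!: sum.cong)
  also have "\<dots> = 2 - 2 * u $ 0"
    using N uu u by (simp add: sum.distrib sum_subtractf sum.delta scalar_prod_def flip: sum_distrib_left)
  finally have ww: "w \<bullet> w = 2 - 2 * u $ 0" .
  fix i assume "i < dim_vec u"
  then have i: "i < N" using u by auto
  have "(reflection_mat N w *\<^sub>v unit_vec N 0) $ i = (if i = 0 then 1 else 0) - c * w $ i * w $ 0"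
    using i N by (simp add: scalar_prod_right_unit reflection_mat_def c_def)
  also have "\<dots> = u $ i"
  proof (cases "w \<bullet> w = 0")
    case True
    then have "w = 0\<^sub>v N" using scalar_prod_self_pos_iff[OF w] by auto
    then show ?thesis using wi[OF i] i by auto
  next
    case False
    then have "c * w $ 0 = -1" using ww wi[OF N] by (simp add: c_def field_simps)
    moreover have "c * w $ i * w $ 0 = w $ i * (c * w $ 0)" by (simp add: ac_simps)
    ultimately show ?thesis using wi[OF i] by simp
  qed
  finally show "(reflection_mat N (u - unit_vec N 0) *\<^sub>v unit_vec N 0) $ i = u $ i"
    unfolding w_def .
qed (use u in auto)

lemma orthonormal_mat_reflection:
  "w \<in> carrier_vec N \<Longrightarrow> orthonormal_mat (reflection_mat N w) N"
  unfolding orthonormal_mat_def using reflection_mat_involutive by simp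

lemma symmetric_mat_unit_vec_eigenvector_block:
  fixes A :: "'a :: comm_ring_1 mat"
  assumes A: "A \<in> carrier_mat (Suc m) (Suc m)" and sym: "transpose_mat A = A"
    and eig: "A *\<^sub>v unit_vec (Suc m) 0 = e \<cdot>\<^sub>v unit_vec (Suc m) 0"
  shows "A = four_block_mat (mat 1 1 (\<lambda>_. e)) (0\<^sub>m 1 m) (0\<^sub>m m 1) (mat m m (\<lambda>(i, j). A $$ (Suc i, Suc j)))"
proof -
  have col0: "A $$ (i, 0) = (if i = 0 then e else 0)" if "i < Suc m" for i
    using arg_cong[OF eig, of "\<lambda>x. x $ i"] A that by (simp add: scalar_prod_right_unit)
  have row0: "A $$ (0, j) = (if j = 0 then e else 0)" if "j < Suc m" for j
    using arg_cong[OF sym, of "\<lambda>X. X $$ (j, 0)"] col0[OF that] A that by simp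
  show ?thesis
    by (rule eq_matI) (use A col0 row0 in \<open>auto simp: less_Suc_eq_0_disj\<close>)
qed

lemma real_symmetric_deflation:
  fixes S :: "real mat"
  assumes S: "S \<in> carrier_mat (Suc m) (Suc m)" and sym: "transpose_mat S = S"
  shows "\<exists>H e B. orthonormal_mat H (Suc m) \<and> B \<in> carrier_mat m m \<and> transpose_mat B = B \<and>
    S = H * four_block_mat (mat 1 1 (\<lambda>_. e)) (0\<^sub>m 1 m) (0\<^sub>m m 1) B * transpose_mat H"
proof -
  obtain e u where u: "u \<in> carrier_vec (Suc m)" and uu: "u \<bullet> u = 1" and Su: "S *\<^sub>v u = e \<cdot>\<^sub>v u"
    using real_symmetric_mat_has_unit_eigenvector[OF S sym] by auto
  define H where "H = reflection_mat (Suc m) (u - unit_vec (Suc m) 0)"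
  have H: "H \<in> carrier_mat (Suc m) (Suc m)" and HT: "transpose_mat H = H"
    and HH: "H * H = 1\<^sub>m (Suc m)" and He: "H *\<^sub>v unit_vec (Suc m) 0 = u"
    unfolding H_def using reflection_mat_involutive reflection_mat_unit_vec[OF u uu] u by auto
  define A where "A = H * S * H"
  have A: "A \<in> carrier_mat (Suc m) (Suc m)" unfolding A_def using H S by auto
  have AT: "transpose_mat A = A" unfolding A_def transpose_sandwich[OF S H] HT sym ..
  have "H *\<^sub>v u = unit_vec (Suc m) 0"
    using He[symmetric] H HH by (simp add: assoc_mult_mat_vec[symmetric, of _ "Suc m" "Suc m" _ "Suc m"])
  then have "A *\<^sub>v unit_vec (Suc m) 0 = e \<cdot>\<^sub>v unit_vec (Suc m) 0"
    unfolding A_def using H S u by (simp add: assoc_mult_mat_vec[of _ "Suc m" "Suc m" _ "Suc m"] He Su mult_mat_vec)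
  note block = symmetric_mat_unit_vec_eigenvector_block[OF A AT this]
  define B where "B = mat m m (\<lambda>(i, j). A $$ (Suc i, Suc j))"
  have BT: "transpose_mat B = B"
  proof (rule eq_matI)
    fix i j assume "i < dim_row B" "j < dim_col B"
    then show "transpose_mat B $$ (i, j) = B $$ (i, j)"
      using arg_cong[OF AT, of "\<lambda>X. X $$ (Suc i, Suc j)"] A by (simp add: B_def)
  qed (auto simp: B_def)
  have orth: "orthonormal_mat H (Suc m)"
    unfolding H_def by (rule orthonormal_mat_reflection) (use u in auto)
  have "H * A * transpose_mat H = (H * H) * S * (H * H)"
    unfolding A_def HT using H S by (simp add: assoc_mult_mat[of _ "Suc m" "Suc m" _ "Suc m" _ "Suc m"])
  then have "S = H * A * transpose_mat H" using HH S by simp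
  also have "A = four_block_mat (mat 1 1 (\<lambda>_. e)) (0\<^sub>m 1 m) (0\<^sub>m m 1) B"
    using block unfolding B_def .
  finally show ?thesis
    using orth BT by (intro exI[of _ H] exI[of _ e] exI[of _ B]) (auto simp: B_def)
qed

lemma conj_mult_mat:
  fixes P Q D :: "'a :: comm_ring_1 mat"
  assumes "P \<in> carrier_mat n n" "Q \<in> carrier_mat n n" "D \<in> carrier_mat n n"
  shows "(P * Q) * D * transpose_mat (P * Q) = P * (Q * D * transpose_mat Q) * transpose_mat P"
  using assms by (simp add: transpose_mult[of P n n Q n] assoc_mult_mat[of _ n n _ n _ n])

theorem real_symmetric_diagonalization:
  fixes S :: "real mat"
  assumes "S \<in> carrier_mat n n" "transpose_mat S = S"
  shows "\<exists>Q d. orthonormal_mat Q n \<and> S = Q * mat_diag n d * transpose_mat Q"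
  using assms
proof (induction n arbitrary: S)
  case 0
  then have "S = 1\<^sub>m 0 * mat_diag 0 (\<lambda>_. 0) * transpose_mat (1\<^sub>m 0)" by (intro eq_matI) auto
  moreover have "orthonormal_mat (1\<^sub>m 0) 0" by unfold_locales auto
  ultimately show ?case by blast
next
  case (Suc m S)
  obtain H e B where H: "orthonormal_mat H (Suc m)" and B: "B \<in> carrier_mat m m" "transpose_mat B = B"
    and S: "S = H * four_block_mat (mat 1 1 (\<lambda>_. e)) (0\<^sub>m 1 m) (0\<^sub>m m 1) B * transpose_mat H"
    using real_symmetric_deflation[OF Suc.prems] by blast
  obtain Q d where Q: "orthonormal_mat Q m" and BQ: "B = Q * mat_diag m d * transpose_mat Q"
    using Suc.IH[OF B] by blast
  define Q1 where "Q1 = four_block_mat (1\<^sub>m 1) (0\<^sub>m 1 m) (0\<^sub>m m 1) Q"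
  define d1 where "d1 = (\<lambda>i. if i = 0 then e else d (i - 1))"
  have Q1: "orthonormal_mat Q1 (Suc m)"
    unfolding Q1_def by (rule orthonormal_mat_four_block[OF Q])
  have "Q1 * mat_diag (Suc m) d1 * transpose_mat Q1
      = four_block_mat (mat 1 1 (\<lambda>_. e)) (0\<^sub>m 1 m) (0\<^sub>m m 1) B"
    unfolding Q1_def d1_def mat_diag_Suc BQ
    by (rule conj_four_block_mat) (use orthonormal_mat.carrier[OF Q] in auto)
  then have "S = (H * Q1) * mat_diag (Suc m) d1 * transpose_mat (H * Q1)"
    unfolding S using conj_mult_mat[OF orthonormal_mat.carrier[OF H] orthonormal_mat.carrier[OF Q1]]
    by simp
  moreover have "orthonormal_mat (H * Q1) (Suc m)" by (rule orthonormal_mat_mult[OF H Q1])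
  ultimately show ?case by blast
qed

section \<open>Positive definite matrices and their square roots\<close>

lemma pd_matD:
  assumes "pd_mat S" "S \<in> carrier_mat n n"
  shows "transpose_mat S = S" "\<And>x. x \<in> carrier_vec n \<Longrightarrow> x \<noteq> 0\<^sub>v n \<Longrightarrow> 0 < x \<bullet> (S *\<^sub>v x)"
  using assms unfolding pd_mat_def by auto

lemma pd_matI:
  assumes "S \<in> carrier_mat n n" "transpose_mat S = S"
    and "\<And>x. x \<in> carrier_vec n \<Longrightarrow> x \<noteq> 0\<^sub>v n \<Longrightarrow> 0 < x \<bullet> (S *\<^sub>v x)"
  shows "pd_mat S"
  using assms unfolding pd_mat_def by auto

lemma pd_mat_mult_vec_eq_0:
  assumes "pd_mat S" "S \<in> carrier_mat n n" "v \<in> carrier_vec n" "S *\<^sub>v v = 0\<^sub>v n"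
  shows "v = 0\<^sub>v n"
  using pd_matD(2)[OF assms(1-3)] assms(3,4) by force

lemma minv_inverse:
  assumes A: "A \<in> carrier_mat n n"
    and inj: "\<And>v. v \<in> carrier_vec n \<Longrightarrow> A *\<^sub>v v = 0\<^sub>v n \<Longrightarrow> v = 0\<^sub>v n"
  shows "minv A \<in> carrier_mat n n" "A * minv A = 1\<^sub>m n" "minv A * A = 1\<^sub>m n"
proof -
  have "det A \<noteq> 0" using det_0_iff_vec_prod_zero_field[OF A] inj by auto
  then have "A \<in> Units (ring_mat TYPE(real) n ())" by (rule det_non_zero_imp_unit[OF A])
  then have "mat_inverse A \<noteq> None" using mat_inverse(1)[OF A] by force
  then obtain B where B: "mat_inverse A = Some B" by auto
  from mat_inverse(2)[OF A B] B
  show "minv A \<in> carrier_mat n n" "A * minv A = 1\<^sub>m n" "minv A * A = 1\<^sub>m n"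
    unfolding minv_def by auto
qed

lemma pd_mat_minv:
  fixes S :: "real mat"
  assumes S: "S \<in> carrier_mat n n" and pd: "pd_mat S"
  shows "minv S \<in> carrier_mat n n" "S * minv S = 1\<^sub>m n" "minv S * S = 1\<^sub>m n" "pd_mat (minv S)"
proof -
  note inv = minv_inverse[OF S pd_mat_mult_vec_eq_0[OF pd S]]
  show Si: "minv S \<in> carrier_mat n n" and SSi: "S * minv S = 1\<^sub>m n" and "minv S * S = 1\<^sub>m n"
    using inv by auto
  have SiT: "transpose_mat (minv S) \<in> carrier_mat n n" using Si by auto
  have "transpose_mat (minv S) * S = 1\<^sub>m n"
    using arg_cong[OF SSi, of transpose_mat] transpose_mult[OF S Si] pd_matD(1)[OF pd S] by simp
  then have sym: "transpose_mat (minv S) = minv S"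
    using assoc_mult_mat[OF SiT S Si] SSi Si SiT by simp
  show "pd_mat (minv S)"
  proof (rule pd_matI[OF Si sym])
    fix x :: "real vec" assume x: "x \<in> carrier_vec n" and x0: "x \<noteq> 0\<^sub>v n"
    define z where "z = minv S *\<^sub>v x"
    have z: "z \<in> carrier_vec n" unfolding z_def using Si x by auto
    have Sz: "S *\<^sub>v z = x" unfolding z_def using assoc_mult_mat_vec[OF S Si x] SSi x by simp
    then have "z \<noteq> 0\<^sub>v n" using x0 S by auto
    then have "0 < z \<bullet> (S *\<^sub>v z)" using pd_matD(2)[OF pd S z] by blast
    also have "z \<bullet> (S *\<^sub>v z) = x \<bullet> z"
      unfolding Sz by (rule comm_scalar_prod[OF z x])
    finally show "0 < x \<bullet> (minv S *\<^sub>v x)" unfolding z_def .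
  qed
qed

lemma (in orthonormal_mat) pd_mat_conj_mat_diag_iff:
  "pd_mat (Q * mat_diag n d * transpose_mat Q) \<longleftrightarrow> (\<forall>i<n. 0 < d i)"
proof
  have S: "Q * mat_diag n d * transpose_mat Q \<in> carrier_mat n n" using carrier by auto
  show "\<forall>i<n. 0 < d i" if "pd_mat (Q * mat_diag n d * transpose_mat Q)"
    using pd_matD(2)[OF that S basis_vec_carrier basis_vec_nonzero] quad_form_basis_vec by auto
  assume pos: "\<forall>i<n. 0 < d i"
  show "pd_mat (Q * mat_diag n d * transpose_mat Q)"
  proof (rule pd_matI[OF S])
    show "transpose_mat (Q * mat_diag n d * transpose_mat Q) = Q * mat_diag n d * transpose_mat Q"
      using transpose_conj by simp
    fix x :: "real vec" assume x: "x \<in> carrier_vec n" and x0: "x \<noteq> 0\<^sub>v n"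
    then have "0 < n" by (cases n) auto
    then have "0 < Min (d ` {..<n})" using pos by (subst Min_gr_iff) auto
    moreover have "Min (d ` {..<n}) * (x \<bullet> x) \<le> x \<bullet> ((Q * mat_diag n d * transpose_mat Q) *\<^sub>v x)"
      by (rule quad_form_conj_mat_diag_lower[OF x]) simp
    ultimately show "0 < x \<bullet> ((Q * mat_diag n d * transpose_mat Q) *\<^sub>v x)"
      using scalar_prod_self_pos_iff[OF x] x0 by (meson mult_pos_pos order_less_le_trans)
  qed
qed

lemma pd_sqrt_exists:
  assumes S: "S \<in> carrier_mat n n" and pd: "pd_mat S"
  shows "\<exists>R. R \<in> carrier_mat n n \<and> pd_mat R \<and> R * R = S"
proof -
  obtain Q d where "orthonormal_mat Q n" and Sq: "S = Q * mat_diag n d * transpose_mat Q"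
    using real_symmetric_diagonalization[OF S pd_matD(1)[OF pd S]] by blast
  interpret orthonormal_mat Q n by fact
  have d: "\<forall>i<n. 0 < d i" using pd unfolding Sq pd_mat_conj_mat_diag_iff .
  define R where "R = Q * mat_diag n (\<lambda>i. sqrt (d i)) * transpose_mat Q"
  have "R * R = Q * mat_diag n (\<lambda>i. sqrt (d i) * sqrt (d i)) * transpose_mat Q"
    unfolding R_def conj_mult[OF mat_diag_dim mat_diag_dim] mat_diag_diag ..
  also have "mat_diag n (\<lambda>i. sqrt (d i) * sqrt (d i)) = mat_diag n d"
    using d by (intro eq_matI) (auto simp: mat_diag_def)
  finally have "R * R = S" unfolding Sq .
  moreover have "pd_mat R" unfolding R_def pd_mat_conj_mat_diag_iff using d by simp
  moreover have "R \<in> carrier_mat n n" unfolding R_def using carrier by auto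
  ultimately show ?thesis by blast
qed

text \<open>Since \<open>R1\<^sup>2 = R2\<^sup>2\<close>, we have \<open>R1 D + D R2 = 0\<close> for \<open>D = R1 - R2\<close>; testing this against an
  eigenvector \<open>v\<close> of \<open>D\<close> gives \<open>\<mu> (v\<^sup>T R1 v + v\<^sup>T R2 v) = 0\<close>.\<close>

lemma pd_sqrt_diff_eigenvalue_eq_0:
  fixes R1 R2 :: "real mat"
  assumes R1: "R1 \<in> carrier_mat n n" "pd_mat R1" and R2: "R2 \<in> carrier_mat n n" "pd_mat R2"
    and eq: "R1 * R1 = R2 * R2"
    and v: "v \<in> carrier_vec n" "v \<noteq> 0\<^sub>v n" and Dv: "(R1 - R2) *\<^sub>v v = \<mu> \<cdot>\<^sub>v v"
  shows "\<mu> = 0"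
proof -
  define D where "D = R1 - R2"
  have D: "D \<in> carrier_mat n n" unfolding D_def using R1(1) R2(1) by auto
  have DT: "transpose_mat D = D"
    unfolding D_def using transpose_minus[OF R1(1) R2(1)] pd_matD(1)[OF R1(2,1)] pd_matD(1)[OF R2(2,1)] by simp
  define a where "a = R1 *\<^sub>v v"
  define b where "b = R2 *\<^sub>v v"
  have a: "a \<in> carrier_vec n" and b: "b \<in> carrier_vec n" unfolding a_def b_def using R1 R2 v by auto
  have "v \<bullet> (R1 *\<^sub>v (D *\<^sub>v v)) = v \<bullet> (R1 *\<^sub>v a) - v \<bullet> (R1 *\<^sub>v b)"
    unfolding D_def a_def b_def using R1 R2 v
    by (simp add: minus_mult_distrib_mat_vec mult_minus_distrib_mat_vec scalar_prod_minus_distrib[of _ n])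
  moreover have "v \<bullet> (D *\<^sub>v b) = v \<bullet> (R1 *\<^sub>v b) - v \<bullet> (R2 *\<^sub>v b)"
    unfolding D_def using R1 R2 v b by (simp add: minus_mult_distrib_mat_vec scalar_prod_minus_distrib[of _ n])
  moreover have "R1 *\<^sub>v a = R2 *\<^sub>v b"
    unfolding a_def b_def using assoc_mult_mat_vec[OF R1(1) R1(1) v(1)] assoc_mult_mat_vec[OF R2(1) R2(1) v(1)] eq
    by simp
  moreover have "v \<bullet> (R1 *\<^sub>v (D *\<^sub>v v)) = \<mu> * (v \<bullet> a)"
    unfolding D_def Dv a_def using R1 v by (simp add: mult_mat_vec scalar_prod_smult_distrib[of _ n])
  moreover have "v \<bullet> (D *\<^sub>v b) = \<mu> * (v \<bullet> b)"
    using transpose_vec_mult_scalar[OF D b v(1)] DT Dv v b unfolding D_def by simp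
  ultimately have "\<mu> * (v \<bullet> a + v \<bullet> b) = 0" by (simp add: algebra_simps)
  moreover have "0 < v \<bullet> a" "0 < v \<bullet> b"
    unfolding a_def b_def using pd_matD(2)[OF R1(2,1) v] pd_matD(2)[OF R2(2,1) v] by auto
  ultimately show ?thesis by simp
qed

lemma pd_sqrt_unique:
  fixes R1 R2 :: "real mat"
  assumes R1: "R1 \<in> carrier_mat n n" "pd_mat R1" and R2: "R2 \<in> carrier_mat n n" "pd_mat R2"
    and eq: "R1 * R1 = R2 * R2"
  shows "R1 = R2"
proof -
  have D: "R1 - R2 \<in> carrier_mat n n" using R2(1) by auto
  have DT: "transpose_mat (R1 - R2) = R1 - R2"
    using transpose_minus[OF R1(1) R2(1)] pd_matD(1)[OF R1(2,1)] pd_matD(1)[OF R2(2,1)] by simp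
  obtain Q d where "orthonormal_mat Q n" and Dq: "R1 - R2 = Q * mat_diag n d * transpose_mat Q"
    using real_symmetric_diagonalization[OF D DT] by blast
  interpret orthonormal_mat Q n by fact
  have "d i = 0" if i: "i < n" for i
    using pd_sqrt_diff_eigenvalue_eq_0[OF R1 R2 eq basis_vec_carrier basis_vec_nonzero[OF i]]
      basis_vec_eigenvector[OF i] unfolding Dq by blast
  then have "mat_diag n d = 0\<^sub>m n n" by (intro eq_matI) (auto simp: mat_diag_def)
  then have "R1 - R2 = 0\<^sub>m n n" unfolding Dq using carrier by simp
  show ?thesis
  proof (rule eq_matI)
    fix i j assume "i < dim_row R2" "j < dim_col R2"
    then show "R1 $$ (i, j) = R2 $$ (i, j)"
      using arg_cong[OF \<open>R1 - R2 = 0\<^sub>m n n\<close>, of "\<lambda>X. X $$ (i, j)"] R1 R2 by simp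
  qed (use R1 R2 in auto)
qed

lemma pd_sqrt:
  assumes "S \<in> carrier_mat n n" "pd_mat S"
  shows "pd_sqrt S \<in> carrier_mat n n" "pd_mat (pd_sqrt S)" "pd_sqrt S * pd_sqrt S = S"
proof -
  have "\<exists>!R. R \<in> carrier_mat (dim_row S) (dim_row S) \<and> pd_mat R \<and> R * R = S"
    using pd_sqrt_exists[OF assms] pd_sqrt_unique assms(1) by auto
  from theI'[OF this] show "pd_sqrt S \<in> carrier_mat n n" "pd_mat (pd_sqrt S)" "pd_sqrt S * pd_sqrt S = S"
    using assms(1) unfolding pd_sqrt_def by auto
qed

lemma full_column_rank_mult_vec_eq_0:
  fixes Ob :: "real mat"
  assumes Ob: "Ob \<in> carrier_mat m n" and rank: "vec_space.rank m Ob = n"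
    and y: "y \<in> carrier_vec n" and Oy: "Ob *\<^sub>v y = 0\<^sub>v m"
  shows "y = 0\<^sub>v n"
proof (rule ccontr)
  interpret vec_space "TYPE(real)" m .
  assume y0: "y \<noteq> 0\<^sub>v n"
  show False
  proof (cases "distinct (cols Ob)")
    case True
    then have "lin_indpt (set (cols Ob))" using full_rank_lin_indpt[OF Ob rank] by auto
    then show False using lin_depI[OF Ob y y0 Oy True] by blast
  next
    case False
    obtain S where S: "maximal S (\<lambda>T. T \<subseteq> set (cols Ob) \<and> lin_indpt T)"
      using maximal_exists[of "\<lambda>T. T \<subseteq> set (cols Ob) \<and> lin_indpt T" "card (set (cols Ob))" "{}"]
      by (meson List.finite_set card_mono empty_iff empty_subsetI finite_lin_indpt2 rev_finite_subset)
    then have "card S \<le> card (set (cols Ob))" by (simp add: card_mono maximal_def)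
    also have "\<dots> < length (cols Ob)"
      using False by (metis card_distinct card_length le_neq_implies_less)
    finally have "card S < n" using Ob by simp
    then show False using rank_card_indpt[OF Ob S] rank by simp
  qed
qed

lemma pd_mat_gram:
  fixes Ob :: "real mat"
  assumes Ob: "Ob \<in> carrier_mat m n"
    and inj: "\<And>y. y \<in> carrier_vec n \<Longrightarrow> Ob *\<^sub>v y = 0\<^sub>v m \<Longrightarrow> y = 0\<^sub>v n"
  shows "pd_mat (transpose_mat Ob * Ob)"
proof (rule pd_matI)
  show "transpose_mat Ob * Ob \<in> carrier_mat n n" using Ob by auto
  show "transpose_mat (transpose_mat Ob * Ob) = transpose_mat Ob * Ob"
    using transpose_mult[of "transpose_mat Ob" n m Ob n] Ob by simp
  fix x :: "real vec" assume x: "x \<in> carrier_vec n" and x0: "x \<noteq> 0\<^sub>v n"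
  have "Ob *\<^sub>v x \<noteq> 0\<^sub>v m" using inj[OF x] x0 by blast
  then show "0 < x \<bullet> ((transpose_mat Ob * Ob) *\<^sub>v x)"
    unfolding quad_form_gram[OF Ob x] using scalar_prod_self_pos_iff[of "Ob *\<^sub>v x" m] Ob x by auto
qed

section \<open>Rayleigh quotients\<close>

lemma lambda_min_similar:
  fixes A B :: "real mat"
  assumes "similar_mat A B" "A \<in> carrier_mat n n" "B \<in> carrier_mat n n"
  shows "lambda_min A = lambda_min B"
proof -
  have "{k. eigenvalue A k} = {k. eigenvalue B k}" using eigenvalue_similar_mat_iff[OF assms] by blast
  then show ?thesis unfolding lambda_min_def by simp
qed

lemma minv_eq_minv_pd_sqrt_square:
  assumes W: "W \<in> carrier_mat n n" "pd_mat W"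
  shows "minv W = minv (pd_sqrt W) * minv (pd_sqrt W)"
proof -
  define H where "H = pd_sqrt W"
  define Hi where "Hi = minv H"
  have H: "H \<in> carrier_mat n n" "pd_mat H" "H * H = W" using pd_sqrt[OF W] unfolding H_def by auto
  have Hi: "Hi \<in> carrier_mat n n" "Hi * H = 1\<^sub>m n"
    using pd_mat_minv[OF H(1,2)] unfolding Hi_def by auto
  have "Hi * Hi * W = Hi * (Hi * H) * H"
    using Hi(1) H(1) unfolding H(3)[symmetric] by (simp add: assoc_mult_mat[of _ n n _ n _ n])
  then have "Hi * Hi * W = 1\<^sub>m n" using Hi H(1) by simp
  moreover have "minv W \<in> carrier_mat n n" "W * minv W = 1\<^sub>m n" using pd_mat_minv[OF W] by auto
  ultimately show ?thesis
    using assoc_mult_mat[of "Hi * Hi" n n W n "minv W" n] Hi W unfolding Hi_def H_def by simp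
qed

lemma lambda_min_rayleigh:
  fixes T :: "real mat"
  assumes T: "T \<in> carrier_mat n n" and sym: "transpose_mat T = T" and n: "0 < n"
  shows "\<And>x. x \<in> carrier_vec n \<Longrightarrow> lambda_min T * (x \<bullet> x) \<le> x \<bullet> (T *\<^sub>v x)"
    and "\<exists>x \<in> carrier_vec n. x \<noteq> 0\<^sub>v n \<and> x \<bullet> (T *\<^sub>v x) = lambda_min T * (x \<bullet> x)"
proof -
  obtain Q d where "orthonormal_mat Q n" and Tq: "T = Q * mat_diag n d * transpose_mat Q"
    using real_symmetric_diagonalization[OF T sym] by blast
  interpret orthonormal_mat Q n by fact
  have "{k. eigenvalue T k} = d ` {..<n}" unfolding Tq eigenvalue_conj_mat_diag_iff by auto
  then have min: "lambda_min T = Min (d ` {..<n})" unfolding lambda_min_def by simp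
  have le: "lambda_min T \<le> d i" if "i < n" for i unfolding min using that by simp
  show "lambda_min T * (x \<bullet> x) \<le> x \<bullet> (T *\<^sub>v x)" if "x \<in> carrier_vec n" for x
  proof -
    have "lambda_min T * (x \<bullet> x) \<le> x \<bullet> ((Q * mat_diag n d * transpose_mat Q) *\<^sub>v x)"
      by (rule quad_form_conj_mat_diag_lower[OF that]) (rule le)
    then show ?thesis using Tq by simp
  qed
  have "Min (d ` {..<n}) \<in> d ` {..<n}" using n by (intro Min_in) auto
  then obtain i where i: "i < n" "d i = lambda_min T" unfolding min by auto
  let ?x = "Q *\<^sub>v unit_vec n i"
  have "?x \<bullet> (T *\<^sub>v ?x) = d i" unfolding Tq by (rule quad_form_basis_vec[OF i(1)])
  then have "?x \<bullet> (T *\<^sub>v ?x) = lambda_min T * (?x \<bullet> ?x)" using basis_vec_norm[OF i(1)] i(2) by simp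
  then show "\<exists>x \<in> carrier_vec n. x \<noteq> 0\<^sub>v n \<and> x \<bullet> (T *\<^sub>v x) = lambda_min T * (x \<bullet> x)"
    using basis_vec_carrier basis_vec_nonzero[OF i(1)] by blast
qed

text \<open>The congruence with \<open>W\<^sup>1\<^sup>/\<^sup>2\<close> turns the pencil \<open>(P, W)\<close> into the symmetric matrix
  \<open>W\<^sup>-\<^sup>1\<^sup>/\<^sup>2 P W\<^sup>-\<^sup>1\<^sup>/\<^sup>2\<close>, which is similar to \<open>P W\<^sup>-\<^sup>1\<close>.\<close>

lemma lambda_min_mult_minv_congruence:
  fixes W P :: "real mat"
  assumes W: "W \<in> carrier_mat n n" "pd_mat W" and P: "P \<in> carrier_mat n n"
  shows "lambda_min (P * minv W) = lambda_min (minv (pd_sqrt W) * P * minv (pd_sqrt W))"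
proof -
  define H where "H = pd_sqrt W"
  define Hi where "Hi = minv H"
  have H: "H \<in> carrier_mat n n" "pd_mat H" using pd_sqrt[OF W] unfolding H_def by auto
  have Hi: "Hi \<in> carrier_mat n n" "H * Hi = 1\<^sub>m n" "Hi * H = 1\<^sub>m n"
    using pd_mat_minv[OF H] unfolding Hi_def by auto
  have "H * (Hi * X) = X" if "X \<in> carrier_mat n n" for X
    using assoc_mult_mat[OF H(1) Hi(1) that] Hi(2) that by simp
  then have "P * minv W = H * (Hi * P * Hi) * Hi"
    unfolding minv_eq_minv_pd_sqrt_square[OF W] H_def[symmetric] Hi_def[symmetric]
    using H Hi P by (simp add: assoc_mult_mat[of _ n n _ n _ n])
  then have "similar_mat (P * minv W) (Hi * P * Hi)"
    by (intro similar_matI[of _ _ H Hi n]) (use H Hi P in auto)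
  then show ?thesis
    unfolding H_def[symmetric] Hi_def[symmetric]
    by (rule lambda_min_similar) (use P Hi W pd_mat_minv[OF W] in auto)
qed

lemma lambda_min_generalized_rayleigh:
  fixes W P :: "real mat"
  assumes W: "W \<in> carrier_mat n n" "pd_mat W" and P: "P \<in> carrier_mat n n" "transpose_mat P = P"
    and n: "0 < n"
  shows "\<And>y. y \<in> carrier_vec n \<Longrightarrow> lambda_min (P * minv W) * (y \<bullet> (W *\<^sub>v y)) \<le> y \<bullet> (P *\<^sub>v y)"
    and "\<exists>y \<in> carrier_vec n. y \<noteq> 0\<^sub>v n \<and> y \<bullet> (P *\<^sub>v y) = lambda_min (P * minv W) * (y \<bullet> (W *\<^sub>v y))"
proof -
  define H where "H = pd_sqrt W"
  define Hi where "Hi = minv H"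
  define T where "T = Hi * P * Hi"
  have H: "H \<in> carrier_mat n n" "pd_mat H" "H * H = W" using pd_sqrt[OF W] unfolding H_def by auto
  have HT: "transpose_mat H = H" using pd_matD(1)[OF H(2,1)] .
  have Hi: "Hi \<in> carrier_mat n n" "H * Hi = 1\<^sub>m n" "Hi * H = 1\<^sub>m n" "pd_mat Hi"
    using pd_mat_minv[OF H(1,2)] unfolding Hi_def by auto
  have HiT: "transpose_mat Hi = Hi" using pd_matD(1)[OF Hi(4,1)] .
  have T: "T \<in> carrier_mat n n" unfolding T_def using Hi P by auto
  have TT: "transpose_mat T = T" unfolding T_def transpose_sandwich[OF P(1) Hi(1)] HiT P(2) ..
  have mu: "lambda_min (P * minv W) = lambda_min T"
    unfolding T_def Hi_def H_def by (rule lambda_min_mult_minv_congruence[OF W P(1)])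
  have P_T: "y \<bullet> (P *\<^sub>v y) = (H *\<^sub>v y) \<bullet> (T *\<^sub>v (H *\<^sub>v y))" if y: "y \<in> carrier_vec n" for y
  proof -
    have "Hi *\<^sub>v (H *\<^sub>v y) = y" using assoc_mult_mat_vec[OF Hi(1) H(1) y] Hi y by simp
    moreover have "(H *\<^sub>v y) \<bullet> ((Hi * P * Hi) *\<^sub>v (H *\<^sub>v y))
        = (Hi *\<^sub>v (H *\<^sub>v y)) \<bullet> (P *\<^sub>v (Hi *\<^sub>v (H *\<^sub>v y)))"
      by (rule quad_form_sandwich[OF P(1) Hi(1) HiT]) (use H y in auto)
    ultimately show ?thesis unfolding T_def by simp
  qed
  have W_norm: "y \<bullet> (W *\<^sub>v y) = (H *\<^sub>v y) \<bullet> (H *\<^sub>v y)" if y: "y \<in> carrier_vec n" for y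
    using quad_form_gram[OF H(1) y] unfolding HT H(3) .
  show "lambda_min (P * minv W) * (y \<bullet> (W *\<^sub>v y)) \<le> y \<bullet> (P *\<^sub>v y)" if y: "y \<in> carrier_vec n" for y
    unfolding mu P_T[OF y] W_norm[OF y] by (rule lambda_min_rayleigh(1)[OF T TT n]) (use H y in auto)
  obtain z where z: "z \<in> carrier_vec n" "z \<noteq> 0\<^sub>v n" and Tz: "z \<bullet> (T *\<^sub>v z) = lambda_min T * (z \<bullet> z)"
    using lambda_min_rayleigh(2)[OF T TT n] by blast
  define y where "y = Hi *\<^sub>v z"
  have y: "y \<in> carrier_vec n" unfolding y_def using Hi(1) z(1) by auto
  have Hy: "H *\<^sub>v y = z" unfolding y_def using assoc_mult_mat_vec[OF H(1) Hi(1) z(1)] Hi(2) z(1) by simp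
  then have "y \<noteq> 0\<^sub>v n" using z(2) H(1) by auto
  moreover have "y \<bullet> (P *\<^sub>v y) = lambda_min (P * minv W) * (y \<bullet> (W *\<^sub>v y))"
    unfolding P_T[OF y] W_norm[OF y] Hy mu by (rule Tz)
  ultimately show "\<exists>y \<in> carrier_vec n. y \<noteq> 0\<^sub>v n \<and> y \<bullet> (P *\<^sub>v y) = lambda_min (P * minv W) * (y \<bullet> (W *\<^sub>v y))"
    using y by blast
qed

section \<open>The observer LMI\<close>

locale observability_lmi =
  fixes Ob :: "real mat" and m n :: nat and Sinv Sroot :: "real mat"
  assumes Ob: "Ob \<in> carrier_mat m n"
    and Ob_inj: "\<And>y. y \<in> carrier_vec n \<Longrightarrow> Ob *\<^sub>v y = 0\<^sub>v m \<Longrightarrow> y = 0\<^sub>v n"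
    and Sinv: "Sinv \<in> carrier_mat n n" "pd_mat Sinv"
    and Sroot: "Sroot \<in> carrier_mat n n" "transpose_mat Sroot = Sroot" "Sroot * Sroot = Sinv"
begin

abbreviation "W \<equiv> transpose_mat Ob * Ob"
abbreviation "M \<equiv> Ob * minv W * transpose_mat Ob"
abbreviation "N \<equiv> Sroot * minv W * transpose_mat Ob"
abbreviation "lmi_mat R \<equiv> transpose_mat N * N + R - M * R * M"
abbreviation "beta_opt \<equiv> lambda_min (Sinv * minv W)"

text \<open>\<open>lsq x\<close> is the least-squares solution of \<open>Ob y = x\<close>, so \<open>M\<close> is the orthogonal projection
  onto the range of \<open>Ob\<close>.\<close>

abbreviation "lsq x \<equiv> minv W *\<^sub>v (transpose_mat Ob *\<^sub>v x)"

lemma W_carrier: "W \<in> carrier_mat n n"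
  using Ob by auto

lemma W_pd: "pd_mat W"
  by (rule pd_mat_gram[OF Ob Ob_inj])

lemma minv_W: "minv W \<in> carrier_mat n n" "W * minv W = 1\<^sub>m n" "minv W * W = 1\<^sub>m n"
    "transpose_mat (minv W) = minv W"
  using pd_mat_minv[OF W_carrier W_pd] pd_matD(1) by auto

lemma M_carrier: "M \<in> carrier_mat m m"
  using Ob minv_W(1) by auto

lemma M_sym: "transpose_mat M = M"
proof -
  have "transpose_mat M = transpose_mat (transpose_mat Ob) * transpose_mat (Ob * minv W)"
    using transpose_mult[of "Ob * minv W" m n "transpose_mat Ob" m] Ob minv_W(1) by simp
  also have "transpose_mat (Ob * minv W) = minv W * transpose_mat Ob"
    using transpose_mult[OF Ob minv_W(1)] minv_W(4) by simp
  finally show ?thesis using Ob minv_W(1) by (simp add: assoc_mult_mat[of _ m n _ n _ m])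
qed

lemma lsq_carrier: "x \<in> carrier_vec m \<Longrightarrow> lsq x \<in> carrier_vec n"
  using Ob minv_W(1) by auto

lemma M_mult_vec: "x \<in> carrier_vec m \<Longrightarrow> M *\<^sub>v x = Ob *\<^sub>v lsq x"
  using Ob minv_W(1) by (simp add: assoc_mult_mat_vec[of _ m n _ n] assoc_mult_mat_vec[of _ m n _ m])

lemma lsq_Ob: "y \<in> carrier_vec n \<Longrightarrow> lsq (Ob *\<^sub>v y) = y"
proof -
  assume y: "y \<in> carrier_vec n"
  have "transpose_mat Ob *\<^sub>v (Ob *\<^sub>v y) = W *\<^sub>v y"
    using assoc_mult_mat_vec[of "transpose_mat Ob" n m Ob n y] Ob y by simp
  then show ?thesis using assoc_mult_mat_vec[OF minv_W(1) W_carrier y] minv_W(3) y by simp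
qed

lemma M_idem: "x \<in> carrier_vec m \<Longrightarrow> M *\<^sub>v (M *\<^sub>v x) = M *\<^sub>v x"
  using M_mult_vec lsq_Ob lsq_carrier Ob by simp

lemma quad_form_NN: "x \<in> carrier_vec m \<Longrightarrow> x \<bullet> ((transpose_mat N * N) *\<^sub>v x) = lsq x \<bullet> (Sinv *\<^sub>v lsq x)"
proof -
  assume x: "x \<in> carrier_vec m"
  have N: "N \<in> carrier_mat n m" using Ob minv_W(1) Sroot(1) by auto
  have Nx: "N *\<^sub>v x = Sroot *\<^sub>v lsq x"
    using Ob minv_W(1) Sroot(1) x by (simp add: assoc_mult_mat_vec[of _ n n _ m] assoc_mult_mat_vec[of _ n n _ n])
  have "x \<bullet> ((transpose_mat N * N) *\<^sub>v x) = (N *\<^sub>v x) \<bullet> (N *\<^sub>v x)"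
    by (rule quad_form_gram[OF N x])
  also have "\<dots> = lsq x \<bullet> ((transpose_mat Sroot * Sroot) *\<^sub>v lsq x)"
    unfolding Nx by (rule quad_form_gram[OF Sroot(1) lsq_carrier[OF x], symmetric])
  finally show ?thesis unfolding Sroot(2,3) .
qed

lemma quad_form_M: "x \<in> carrier_vec m \<Longrightarrow> x \<bullet> (M *\<^sub>v x) = lsq x \<bullet> (W *\<^sub>v lsq x)"
proof -
  assume x: "x \<in> carrier_vec m"
  define w where "w = transpose_mat Ob *\<^sub>v x"
  have w: "w \<in> carrier_vec n" unfolding w_def using Ob x by auto
  have "W *\<^sub>v (minv W *\<^sub>v w) = w" using assoc_mult_mat_vec[OF W_carrier minv_W(1) w] minv_W(2) w by simp
  then have "lsq x \<bullet> (W *\<^sub>v lsq x) = (minv W *\<^sub>v w) \<bullet> w" unfolding w_def by simp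
  also have "\<dots> = w \<bullet> (minv W *\<^sub>v w)" by (rule comm_scalar_prod[of _ n]) (use minv_W(1) w in auto)
  also have "\<dots> = x \<bullet> (M *\<^sub>v x)"
    unfolding M_mult_vec[OF x] w_def
    using transpose_vec_mult_scalar[OF Ob _ x, of "lsq x"] minv_W(1) Ob x by auto
  finally show ?thesis ..
qed

lemma quad_form_lmi_mat:
  assumes x: "x \<in> carrier_vec m" and R: "R \<in> carrier_mat m m"
  shows "x \<bullet> ((lmi_mat R - \<beta> \<cdot>\<^sub>m 1\<^sub>m m) *\<^sub>v x)
    = lsq x \<bullet> (Sinv *\<^sub>v lsq x) + x \<bullet> (R *\<^sub>v x) - (M *\<^sub>v x) \<bullet> (R *\<^sub>v (M *\<^sub>v x)) - \<beta> * (x \<bullet> x)"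
proof -
  have NN: "transpose_mat N * N \<in> carrier_mat m m" using Ob minv_W(1) Sroot(1) by auto
  have MRM: "M * R * M \<in> carrier_mat m m" using M_carrier R by auto
  show ?thesis
    using quad_form_minus[OF minus_carrier_mat[OF MRM] smult_carrier_mat[OF one_carrier_mat] x]
      quad_form_minus[OF add_carrier_mat[OF R] MRM x] quad_form_add[OF NN R x]
      quad_form_smult[OF one_carrier_mat x] quad_form_sandwich[OF R M_carrier M_sym x] quad_form_NN[OF x] x
    by simp
qed

lemma dim_row_lmi_mat: "dim_row (lmi_mat R) = m"
  using Ob by simp

lemma transpose_lmi_mat:
  assumes R: "R \<in> carrier_mat m m" and RT: "transpose_mat R = R"
  shows "transpose_mat (lmi_mat R) = lmi_mat R"
proof -
  have NN: "transpose_mat N * N \<in> carrier_mat m m" using Ob minv_W(1) Sroot(1) by auto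
  have MRM: "M * R * M \<in> carrier_mat m m" using M_carrier R by auto
  have "transpose_mat (M * R * M) = M * R * M"
    using transpose_sandwich[OF R M_carrier] M_sym RT by simp
  moreover have "transpose_mat (transpose_mat N * N) = transpose_mat N * N"
    using transpose_mult[of "transpose_mat N" m n N m] Ob minv_W(1) Sroot(1) by auto
  ultimately show ?thesis
    unfolding transpose_minus[OF add_carrier_mat[OF R] MRM] transpose_add[OF NN R] RT by simp
qed

lemma beta_opt_rayleigh:
  assumes "0 < n"
  shows "\<And>y. y \<in> carrier_vec n \<Longrightarrow> beta_opt * (y \<bullet> (W *\<^sub>v y)) \<le> y \<bullet> (Sinv *\<^sub>v y)"
    and "\<exists>y \<in> carrier_vec n. y \<noteq> 0\<^sub>v n \<and> y \<bullet> (Sinv *\<^sub>v y) = beta_opt * (y \<bullet> (W *\<^sub>v y))"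
  using lambda_min_generalized_rayleigh[OF W_carrier W_pd Sinv(1) pd_matD(1)[OF Sinv(2,1)] assms] by auto

lemma beta_opt_pos:
  assumes "0 < n"
  shows "0 < beta_opt"
proof -
  obtain y where y: "y \<in> carrier_vec n" "y \<noteq> 0\<^sub>v n" and eq: "y \<bullet> (Sinv *\<^sub>v y) = beta_opt * (y \<bullet> (W *\<^sub>v y))"
    using beta_opt_rayleigh(2)[OF assms] by blast
  have "0 < y \<bullet> (W *\<^sub>v y)" "0 < y \<bullet> (Sinv *\<^sub>v y)"
    using pd_matD(2)[OF W_pd W_carrier y] pd_matD(2)[OF Sinv(2,1) y] by auto
  then show ?thesis using eq by (simp add: zero_less_mult_iff)
qed

lemma lmi_feasible_beta_opt:
  assumes n: "0 < n"
  shows "\<exists>R \<in> carrier_mat m m. psd_ge (lmi_mat R) beta_opt"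
proof
  define R where "R = beta_opt \<cdot>\<^sub>m (1\<^sub>m m - M)"
  show R: "R \<in> carrier_mat m m"
    unfolding R_def using smult_carrier_mat[OF minus_carrier_mat[OF M_carrier]] by blast
  have RT: "transpose_mat R = R"
    unfolding R_def transpose_smult_mat transpose_minus[OF one_carrier_mat M_carrier] M_sym by simp
  have R_quad: "v \<bullet> (R *\<^sub>v v) = beta_opt * (v \<bullet> v - v \<bullet> (M *\<^sub>v v))" if v: "v \<in> carrier_vec m" for v
    unfolding R_def quad_form_smult[OF minus_carrier_mat[OF M_carrier] v]
      quad_form_minus[OF one_carrier_mat M_carrier v] using v by simp
  define Z where "Z = lmi_mat R - beta_opt \<cdot>\<^sub>m 1\<^sub>m m"
  have Z: "Z \<in> carrier_mat m m" unfolding Z_def using R M_carrier by auto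
  have MRM: "M * R * M \<in> carrier_mat m m" using M_carrier R by auto
  have ZT: "transpose_mat Z = Z"
    unfolding Z_def transpose_minus[OF minus_carrier_mat[OF MRM] smult_carrier_mat[OF one_carrier_mat]]
      transpose_lmi_mat[OF R RT] transpose_smult_mat transpose_one ..
  have "0 \<le> x \<bullet> (Z *\<^sub>v x)" if x: "x \<in> carrier_vec m" for x
  proof -
    have Mx: "M *\<^sub>v x \<in> carrier_vec m" using M_carrier x by auto
    have "(M *\<^sub>v x) \<bullet> (R *\<^sub>v (M *\<^sub>v x)) = 0"
      unfolding R_quad[OF Mx] M_idem[OF x] by simp
    then have "x \<bullet> (Z *\<^sub>v x) = lsq x \<bullet> (Sinv *\<^sub>v lsq x) - beta_opt * (lsq x \<bullet> (W *\<^sub>v lsq x))"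
      unfolding Z_def quad_form_lmi_mat[OF x R] R_quad[OF x] quad_form_M[OF x] by (simp add: algebra_simps)
    then show ?thesis using beta_opt_rayleigh(1)[OF n lsq_carrier[OF x]] by simp
  qed
  then have "psd_mat Z" unfolding psd_mat_def using Z ZT by auto
  then show "psd_ge (lmi_mat R) beta_opt" unfolding psd_ge_def dim_row_lmi_mat Z_def .
qed

lemma lmi_feasible_le_beta_opt:
  assumes n: "0 < n" and R: "R \<in> carrier_mat m m" and feasible: "psd_ge (lmi_mat R) \<beta>"
  shows "\<beta> \<le> beta_opt"
proof -
  obtain y where y: "y \<in> carrier_vec n" "y \<noteq> 0\<^sub>v n"
    and eq: "y \<bullet> (Sinv *\<^sub>v y) = beta_opt * (y \<bullet> (W *\<^sub>v y))"
    using beta_opt_rayleigh(2)[OF n] by blast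
  define x where "x = Ob *\<^sub>v y"
  have x: "x \<in> carrier_vec m" unfolding x_def using Ob y by auto
  have Mx: "M *\<^sub>v x = x" and lsq_x: "lsq x = y"
    unfolding x_def using M_mult_vec lsq_Ob[OF y(1)] Ob y(1) by auto
  have "x \<bullet> x = y \<bullet> (W *\<^sub>v y)" unfolding x_def using quad_form_gram[OF Ob y(1)] by simp
  then have "x \<bullet> ((lmi_mat R - \<beta> \<cdot>\<^sub>m 1\<^sub>m m) *\<^sub>v x) = (beta_opt - \<beta>) * (y \<bullet> (W *\<^sub>v y))"
    unfolding quad_form_lmi_mat[OF x R] Mx lsq_x eq by (simp add: algebra_simps)
  moreover have "0 \<le> x \<bullet> ((lmi_mat R - \<beta> \<cdot>\<^sub>m 1\<^sub>m m) *\<^sub>v x)"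
    using feasible x unfolding psd_ge_def psd_mat_def dim_row_lmi_mat by auto
  moreover have "0 < y \<bullet> (W *\<^sub>v y)" using pd_matD(2)[OF W_pd W_carrier y] .
  ultimately show ?thesis by (simp add: zero_le_mult_iff)
qed

end

theorem theorem7:
  fixes A C Sigma_v :: "real mat" and n p K :: nat
  assumes "0 < n"
    and "A \<in> carrier_mat n n" and "C \<in> carrier_mat p n"
    and "vec_space.rank (p * K) (obs_mat A C K) = n"
    and "Sigma_v \<in> carrier_mat n n" and "pd_mat Sigma_v"
  shows
    "let Ok = obs_mat A C K;
         Wo = transpose_mat Ok * Ok;
         M = Ok * minv Wo * transpose_mat Ok;
         N = pd_sqrt (minv Sigma_v) * minv Wo * transpose_mat Ok;
         feasible = (\<lambda>\<beta>::real. 0 < \<beta> \<and> (\<exists>R \<in> carrier_mat (p * K) (p * K).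
                        psd_ge (transpose_mat N * N + R - M * R * M) \<beta>));
         \<beta>opt = lambda_min (minv Sigma_v * minv Wo)
     in feasible \<beta>opt \<and> (\<forall>\<beta>. feasible \<beta> \<longrightarrow> \<beta> \<le> \<beta>opt)"
proof -
  have Ok: "obs_mat A C K \<in> carrier_mat (p * K) n" using assms(3) by (simp add: obs_mat_def)
  have Sinv: "minv Sigma_v \<in> carrier_mat n n" "pd_mat (minv Sigma_v)"
    using pd_mat_minv[OF assms(5,6)] by auto
  interpret lmi: observability_lmi "obs_mat A C K" "p * K" n "minv Sigma_v" "pd_sqrt (minv Sigma_v)"
  proof
    show "\<And>y. y \<in> carrier_vec n \<Longrightarrow> obs_mat A C K *\<^sub>v y = 0\<^sub>v (p * K) \<Longrightarrow> y = 0\<^sub>v n"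
      by (rule full_column_rank_mult_vec_eq_0[OF Ok assms(4)])
    show "transpose_mat (pd_sqrt (minv Sigma_v)) = pd_sqrt (minv Sigma_v)"
      using pd_matD(1) pd_sqrt[OF Sinv] by blast
  qed (use Ok Sinv pd_sqrt[OF Sinv] in auto)
  show ?thesis
    unfolding Let_def
    using lmi.beta_opt_pos[OF assms(1)] lmi.lmi_feasible_beta_opt[OF assms(1)]
      lmi.lmi_feasible_le_beta_opt[OF assms(1)] by blast
qed

end
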